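(* Let $R$ and $Q$ be finite sequences of formulas and $S=R\cdot Q$ their concatenation. For all models $I,J$: $I\le_{\emptyset S}J$ holds if and only if $I\le_{\emptyset Q}J$ and (either $J\not\le_{\emptyset Q}I$ or $I\le_{\emptyset R}J$).
   Context: Propositional models are truth assignments over a finite set of variables; a formula used where a set of models is expected stands for its set of models. A doxastic state is a sequence $C=[C(0),\ldots,C(k)]$ of nonempty, pairwise disjoint sets of models covering all models; $I\le_C J$ iff $I\in C(i)$, $J\in C(j)$ with $i\le j$. The flat doxastic state $\emptyset$ is $[\text{all models}]$. Lexicographic revision: $C\,\mathrm{lex}(A)=[C(0)\cap A,\ldots,C(k)\cap A,C(0)\setminus A,\ldots,C(k)\setminus A]$, empty sets discarded. For a sequence of formulas $T=[T_1,\ldots,T_n]$, $\emptyset T$ denotes $\emptyset$ revised lexicographically by $T_1$, then $T_2$, ..., then $T_n$ ($\emptyset[\,]=\emptyset$). *)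

theory Defs
  imports Main
begin

datatype 'v formula =
    FTrue | FFalse | Var 'v | Neg "'v formula"
  | Conj "'v formula" "'v formula" | Disj "'v formula" "'v formula"
  | Impl "'v formula" "'v formula"

type_synonym 'v model = "'v \<Rightarrow> bool"

fun holds :: "'v model \<Rightarrow> 'v formula \<Rightarrow> bool" where
  "holds I FTrue = True"
| "holds I FFalse = False"
| "holds I (Var x) = I x"
| "holds I (Neg A) = (\<not> holds I A)"
| "holds I (Conj A B) = (holds I A \<and> holds I B)"
| "holds I (Disj A B) = (holds I A \<or> holds I B)"
| "holds I (Impl A B) = (holds I A \<longrightarrow> holds I B)"

definition mods :: "'v formula \<Rightarrow> 'v model set" where
  "mods A = {I. holds I A}"

type_synonym 'v doxstate = "'v model set list"

definition doxastic_state :: "'v doxstate \<Rightarrow> bool" where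
  "doxastic_state C \<longleftrightarrow> (\<forall>i<length C. C ! i \<noteq> {})
     \<and> (\<forall>i<length C. \<forall>j<length C. i \<noteq> j \<longrightarrow> C ! i \<inter> C ! j = {})
     \<and> (\<Union>(set C) = UNIV)"

definition dox_le :: "'v doxstate \<Rightarrow> 'v model \<Rightarrow> 'v model \<Rightarrow> bool" where
  "dox_le C I J \<longleftrightarrow> (\<exists>i<length C. \<exists>j<length C. I \<in> C ! i \<and> J \<in> C ! j \<and> i \<le> j)"

definition flat :: "'v doxstate" where
  "flat = [UNIV]"

definition lex :: "'v doxstate \<Rightarrow> 'v formula \<Rightarrow> 'v doxstate" where
  "lex C A = filter (\<lambda>c. c \<noteq> {}) (map (\<lambda>c. c \<inter> mods A) C @ map (\<lambda>c. c - mods A) C)"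

text \<open>\<emptyset>T: flat state revised lexicographically by T_1, then T_2, ..., T_n.\<close>
definition revise_seq :: "'v doxstate \<Rightarrow> 'v formula list \<Rightarrow> 'v doxstate" where
  "revise_seq C T = foldl lex C T"

abbreviation flat_rev :: "'v formula list \<Rightarrow> 'v doxstate" where
  "flat_rev T \<equiv> revise_seq flat T"

end

theory Submission
  imports Defs
begin

(* A lexicographic revision by A ranks I strictly below J if I satisfies A and J does not,
   and otherwise keeps the prior order.  Iterating, the order after revising a state C by Q
   compares models by the last formula of Q on which they differ; only when Q does not
   separate them at all, i.e. when they are tied in the flat state revised by Q, does the
   prior order C decide.  Taking C to be the flat state revised by R gives the theorem. *)

lemma dox_le_Nil [simp]: "\<not> dox_le [] I J"
  by (simp add: dox_le_def)

lemma dox_le_Cons [simp]: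
  "dox_le (c # cs) I J \<longleftrightarrow> (I \<in> c \<and> J \<in> \<Union>(set (c # cs))) \<or> dox_le cs I J"
proof
  assume "dox_le (c # cs) I J"
  then obtain i j where ij: "i < length (c # cs)" "j < length (c # cs)"
      "I \<in> (c # cs) ! i" "J \<in> (c # cs) ! j" "i \<le> j"
    unfolding dox_le_def by blast
  show "(I \<in> c \<and> J \<in> \<Union>(set (c # cs))) \<or> dox_le cs I J"
  proof (cases i)
    case 0
    then show ?thesis using ij nth_mem[OF ij(2)] by auto
  next
    case (Suc k)
    then obtain l where "j = Suc l" using ij by (cases j) auto
    with ij Suc have "dox_le cs I J" unfolding dox_le_def by (auto intro: le_less_trans)
    then show ?thesis by simp
  qed
next
  assume "(I \<in> c \<and> J \<in> \<Union>(set (c # cs))) \<or> dox_le cs I J"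
  then show "dox_le (c # cs) I J"
  proof
    assume I_J: "I \<in> c \<and> J \<in> \<Union>(set (c # cs))"
    then obtain j where "j < length (c # cs)" "J \<in> (c # cs) ! j"
      by (metis UnionE in_set_conv_nth)
    then show ?thesis using I_J unfolding dox_le_def by (intro exI[of _ 0]) auto
  next
    assume "dox_le cs I J"
    then obtain i j where "i < length cs" "j < length cs" "I \<in> cs ! i" "J \<in> cs ! j" "i \<le> j"
      unfolding dox_le_def by blast
    then show ?thesis unfolding dox_le_def
      by (intro exI[of _ "Suc i"] conjI exI[of _ "Suc j"]) auto
  qed
qed

lemma dox_le_filter_nonempty: "dox_le (filter (\<lambda>c. c \<noteq> {}) C) I J \<longleftrightarrow> dox_le C I J"
  by (induction C) auto

lemma dox_le_append:
  "dox_le (xs @ ys) I J \<longleftrightarrow>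
     dox_le xs I J \<or> (I \<in> \<Union>(set xs) \<and> J \<in> \<Union>(set ys)) \<or> dox_le ys I J"
  by (induction xs) auto

lemma dox_le_map_inter: "dox_le (map (\<lambda>c. c \<inter> A) C) I J \<longleftrightarrow> I \<in> A \<and> J \<in> A \<and> dox_le C I J"
  by (induction C) auto

lemma dox_le_map_diff: "dox_le (map (\<lambda>c. c - A) C) I J \<longleftrightarrow> I \<notin> A \<and> J \<notin> A \<and> dox_le C I J"
  by (induction C) auto

lemma Union_set_lex: "\<Union>(set (lex C A)) = \<Union>(set C)"
  unfolding lex_def by auto

lemma Union_set_revise_seq: "\<Union>(set (revise_seq C Q)) = \<Union>(set C)"
  unfolding revise_seq_def by (induction Q arbitrary: C) (auto simp: Union_set_lex)

lemma Union_set_flat_rev: "\<Union>(set (flat_rev Q)) = UNIV"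
  by (simp add: Union_set_revise_seq flat_def)

lemma dox_le_flat [simp]: "dox_le flat I J"
  by (simp add: flat_def)

lemma dox_le_lex:
  assumes "\<Union>(set C) = UNIV"
  shows "dox_le (lex C A) I J \<longleftrightarrow>
           (I \<in> mods A \<and> J \<notin> mods A) \<or> ((I \<in> mods A \<longleftrightarrow> J \<in> mods A) \<and> dox_le C I J)"
  unfolding lex_def dox_le_filter_nonempty dox_le_append dox_le_map_inter dox_le_map_diff
  using assms by auto

lemma revise_seq_snoc: "revise_seq C (Q @ [A]) = lex (revise_seq C Q) A"
  by (simp add: revise_seq_def)

lemma revise_seq_append: "revise_seq C (R @ Q) = revise_seq (revise_seq C R) Q"
  by (simp add: revise_seq_def)

lemma dox_le_revise_seq:
  assumes "\<Union>(set C) = UNIV"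
  shows "dox_le (revise_seq C Q) I J \<longleftrightarrow>
           dox_le (flat_rev Q) I J \<and> (\<not> dox_le (flat_rev Q) J I \<or> dox_le C I J)"
proof (induction Q arbitrary: I J rule: rev_induct)
  case Nil
  then show ?case by (simp add: revise_seq_def)
next
  case (snoc A Q)
  have "\<Union>(set (revise_seq C Q)) = UNIV"
    using assms by (simp add: Union_set_revise_seq)
  then have "dox_le (revise_seq C (Q @ [A])) I J \<longleftrightarrow>
      (I \<in> mods A \<and> J \<notin> mods A) \<or> ((I \<in> mods A \<longleftrightarrow> J \<in> mods A) \<and> dox_le (revise_seq C Q) I J)"
    by (simp add: revise_seq_snoc dox_le_lex)
  moreover have "\<And>I J. dox_le (flat_rev (Q @ [A])) I J \<longleftrightarrow>
      (I \<in> mods A \<and> J \<notin> mods A) \<or> ((I \<in> mods A \<longleftrightarrow> J \<in> mods A) \<and> dox_le (flat_rev Q) I J)"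
    by (simp add: revise_seq_snoc dox_le_lex Union_set_flat_rev)
  ultimately show ?case
    unfolding snoc.IH[of I J] by (cases "I \<in> mods A"; cases "J \<in> mods A") simp_all
qed

theorem mainTheorem18:
  fixes R Q :: "('v::finite) formula list" and I J :: "'v model"
  shows "dox_le (flat_rev (R @ Q)) I J \<longleftrightarrow>
           dox_le (flat_rev Q) I J \<and>
           (\<not> dox_le (flat_rev Q) J I \<or> dox_le (flat_rev R) I J)"
  unfolding revise_seq_append using dox_le_revise_seq[OF Union_set_flat_rev] .

end
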